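(* Let $\varepsilon>0$ and let $r,s\in\mathbb{C}\setminus\{0\}$ with $s/r\notin\mathbb{R}$. Then for all piecewise continuous functions $\mathbf{f},\mathbf{g}:[a,b]\to\mathbb{C}^d$ and all $t\in[a,b]$, \[ \Box^{[r,s]}_\varepsilon(\mathbf f\cdot\mathbf g)(t)=\mathbf f(t)\cdot\Box^{[r,s]}_\varepsilon\mathbf g(t)+\mathbf g(t)\cdot\Box^{[r,s]}_\varepsilon\mathbf f(t) +\frac{\varepsilon(r\bar s^2-\bar r^2 s)}{(r\bar s-\bar r s)^2}\,\Box^{[r,s]}_\varepsilon\mathbf f(t)\cdot\Box^{[r,s]}_\varepsilon\mathbf g(t) -\frac{\varepsilon rs(r-s)}{(r\bar s-\bar r s)^2}\,\Box^{[\bar r,\bar s]}_\varepsilon\mathbf f(t)\cdot\Box^{[\bar r,\bar s]}_\varepsilon\mathbf g(t) +\frac{\varepsilon rs(\bar r-\bar s)}{(r\bar s-\bar r s)^2}\Big(\Box^{[r,s]}_\varepsilon\mathbf f(t)\cdot\Box^{[\bar r,\bar s]}_\varepsilon\mathbf g(t)+\Box^{[\bar r,\bar s]}_\varepsilon\mathbf f(t)\cdot\Box^{[r,s]}_\varepsilon\mathbf g(t)\Big). \]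
   Context: Fix an interval $[a,b]$ and a time step $\varepsilon>0$. For each integer $\ell$, $\chi_\ell$ denotes the characteristic (indicator) function of the interval $[\max(a,a+\ell\varepsilon),\min(b,b+\ell\varepsilon)]$. For $r,s\in\mathbb{C}$ and a function $\mathbf x:[a,b]\to\mathbb{C}^d$, the operator $\Box^{[r,s]}_\varepsilon$ is defined for $t\in[a,b]$ by \[ \Box^{[r,s]}_\varepsilon\mathbf x(t)=-\chi_{1}(t)\frac{s}{\varepsilon}\mathbf x(t-\varepsilon)+\frac{s-r}{\varepsilon}\mathbf x(t)+\chi_{-1}(t)\frac{r}{\varepsilon}\mathbf x(t+\varepsilon), \] with the convention that a term multiplied by a vanishing characteristic function is $0$ (even if the argument lies outside $[a,b]$). The operator acts componentwise on vector-valued functions and also applies to scalar functions. Here $\mathbf f\cdot\mathbf g=\sum_{j=1}^d f_jg_j$ is the bilinear (non-conjugated) dot product, and $\bar r$ denotes complex conjugation. *)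

theory Defs
  imports "HOL-Analysis.Analysis"
begin

definition piecewise_continuous_on ::
  "real \<Rightarrow> real \<Rightarrow> (real \<Rightarrow> 'b::topological_space) \<Rightarrow> bool" where
  "piecewise_continuous_on a b f \<longleftrightarrow>
     (\<exists>S. finite S \<and> continuous_on ({a..b} - S) f \<and>
        (\<forall>x\<in>S \<inter> {a..b}.
           (a < x \<longrightarrow> (\<exists>l. (f \<longlongrightarrow> l) (at_left x))) \<and>
           (x < b \<longrightarrow> (\<exists>l. (f \<longlongrightarrow> l) (at_right x)))))"

text \<open>Support interval of the characteristic function \<chi>_l.\<close>
definition chi_set :: "real \<Rightarrow> real \<Rightarrow> real \<Rightarrow> int \<Rightarrow> real set" where
  "chi_set a b eps l = {max a (a + of_int l * eps) .. min b (b + of_int l * eps)}"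

text \<open>The operator on scalar functions (terms with vanishing \<chi> are 0).\<close>
definition box_scalar ::
  "real \<Rightarrow> real \<Rightarrow> real \<Rightarrow> complex \<Rightarrow> complex \<Rightarrow> (real \<Rightarrow> complex) \<Rightarrow> real \<Rightarrow> complex" where
  "box_scalar a b eps r s x t =
     (if t \<in> chi_set a b eps 1 then - (s / complex_of_real eps) * x (t - eps) else 0)
     + ((s - r) / complex_of_real eps) * x t
     + (if t \<in> chi_set a b eps (-1) then (r / complex_of_real eps) * x (t + eps) else 0)"

definition box_vec ::
  "real \<Rightarrow> real \<Rightarrow> real \<Rightarrow> complex \<Rightarrow> complex \<Rightarrow> (real \<Rightarrow> complex ^ 'd) \<Rightarrow> real \<Rightarrow> complex ^ 'd" where
  "box_vec a b eps r s x t = (\<chi> i. box_scalar a b eps r s (\<lambda>u. x u $ i) t)"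

definition bdot :: "complex ^ 'd \<Rightarrow> complex ^ 'd \<Rightarrow> complex" where
  "bdot u v = (\<Sum>i\<in>UNIV. u $ i * v $ i)"

end

theory Submission
  imports Defs
begin

(*
  With the truncated shifts  x_b(t) = chi_1(t) x(t - eps)  and  x_f(t) = chi_{-1}(t) x(t + eps),
  the operator reads  eps * Box^[r,s] x(t) = r (x_f - x)(t) - s (x_b - x)(t).  The truncated
  shifts are multiplicative, so the differences obey a Leibniz rule with the remainder
  r q q' - s p p'  (p, q the backward/forward differences of the two factors).  When
  r s' - r' s is nonzero, the pair of operators Box^[r,s], Box^[r',s'] determines p and q
  linearly, so the remainder is a quadratic form in these two operators.  This gives a scalar
  product rule for every such pair (r', s'); the theorem is the case (r', s') = (cnj r, cnj s),
  where s/r not real makes the determinant nonzero, and the vector version follows from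
  linearity of the operator by summing over the components of the bilinear dot product.
*)

text \<open>Cramer's rule for the values  r q - s p  and  r' q - s' p  of two operators: their
  combinations give p and q times the determinant, so p and q are determined when it is
  nonzero.\<close>
lemma solve_two_operators:
  fixes r s r' s' p q :: "'a::comm_ring"
  shows "(r * s' - r' * s) * p = r' * (r * q - s * p) - r * (r' * q - s' * p)"
    and "(r * s' - r' * s) * q = s' * (r * q - s * p) - s * (r' * q - s' * p)"
  by (simp_all add: algebra_simps)

lemma remainder_in_two_operators:
  fixes r s r' s' p q p' q' :: "'a::field"
  assumes det: "r * s' - r' * s \<noteq> 0"
  shows "r * (q * q') - s * (p * p') =
     ((r * s'^2 - r'^2 * s) * ((r * q - s * p) * (r * q' - s * p'))
      - r * s * (r - s) * ((r' * q - s' * p) * (r' * q' - s' * p'))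
      + r * s * (r' - s') * ((r * q - s * p) * (r' * q' - s' * p')
                             + (r' * q - s' * p) * (r * q' - s * p'))) / (r * s' - r' * s)^2"
proof -
  define \<Delta> where "\<Delta> = r * s' - r' * s"
  define u v u' v' where "u = r * q - s * p" and "v = r' * q - s' * p"
    and "u' = r * q' - s * p'" and "v' = r' * q' - s' * p'"
  have inverse: "\<Delta> * p = r' * u - r * v" "\<Delta> * q = s' * u - s * v"
                 "\<Delta> * p' = r' * u' - r * v'" "\<Delta> * q' = s' * u' - s * v'"
    unfolding \<Delta>_def u_def v_def u'_def v'_def by (rule solve_two_operators)+
  have "\<Delta>^2 * (r * (q * q') - s * (p * p')) = r * ((\<Delta> * q) * (\<Delta> * q')) - s * ((\<Delta> * p) * (\<Delta> * p'))"
    by (simp add: algebra_simps power2_eq_square)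
  also have "\<dots> = r * ((s' * u - s * v) * (s' * u' - s * v')) - s * ((r' * u - r * v) * (r' * u' - r * v'))"
    by (simp only: inverse)
  also have "\<dots> = (r * s'^2 - r'^2 * s) * (u * u') - r * s * (r - s) * (v * v')
                  + r * s * (r' - s') * (u * v' + v * u')"
    by (simp add: algebra_simps power2_eq_square)
  finally show ?thesis
    using det unfolding \<Delta>_def u_def v_def u'_def v'_def by (simp add: field_simps)
qed

lemma three_point_product_rule:
  fixes e r s r' s' x0 xb xf y0 yb yf :: "'a::field"
  assumes e: "e \<noteq> 0" and det: "r * s' - r' * s \<noteq> 0"
  defines "D \<equiv> \<lambda>r s z0 zb zf. (r * (zf - z0) - s * (zb - z0)) / e"
  shows "D r s (x0 * y0) (xb * yb) (xf * yf) =
     x0 * D r s y0 yb yf + y0 * D r s x0 xb xf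
     + (e * (r * s'^2 - r'^2 * s) / (r * s' - r' * s)^2) * (D r s x0 xb xf * D r s y0 yb yf)
     - (e * r * s * (r - s) / (r * s' - r' * s)^2) * (D r' s' x0 xb xf * D r' s' y0 yb yf)
     + (e * r * s * (r' - s') / (r * s' - r' * s)^2)
         * (D r s x0 xb xf * D r' s' y0 yb yf + D r' s' x0 xb xf * D r s y0 yb yf)"
proof -
  define p q p' q' where "p = xb - x0" and "q = xf - x0" and "p' = yb - y0" and "q' = yf - y0"
  have leibniz: "zb * wb - z0 * w0 = z0 * (wb - w0) + w0 * (zb - z0) + (zb - z0) * (wb - w0)"
    for z0 zb w0 wb :: 'a
    by (simp add: algebra_simps)
  have scaled: "e * D r s z0 zb zf = r * (zf - z0) - s * (zb - z0)" for r s z0 zb zf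
    unfolding D_def using e by simp
  define X Y X' Y' where "X = D r s x0 xb xf" and "Y = D r s y0 yb yf"
    and "X' = D r' s' x0 xb xf" and "Y' = D r' s' y0 yb yf"
  have operator_values: "r * q - s * p = e * X" "r * q' - s * p' = e * Y"
    "r' * q - s' * p = e * X'" "r' * q' - s' * p' = e * Y'"
    unfolding X_def Y_def X'_def Y'_def scaled p_def q_def p'_def q'_def by simp_all
  have "e * D r s (x0 * y0) (xb * yb) (xf * yf) =
      x0 * (r * q' - s * p') + y0 * (r * q - s * p) + (r * (q * q') - s * (p * p'))"
    unfolding scaled p_def q_def p'_def q'_def leibniz[of xf yf] leibniz[of xb yb]
    by (simp add: algebra_simps)
  also note remainder_in_two_operators[OF det, of q q' p p']
  finally have "e * D r s (x0 * y0) (xb * yb) (xf * yf) =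
      e * (x0 * Y + y0 * X
           + (e * (r * s'^2 - r'^2 * s) / (r * s' - r' * s)^2) * (X * Y)
           - (e * r * s * (r - s) / (r * s' - r' * s)^2) * (X' * Y')
           + (e * r * s * (r' - s') / (r * s' - r' * s)^2) * (X * Y' + X' * Y))"
    unfolding operator_values by (simp add: algebra_simps add_divide_distrib diff_divide_distrib)
  then show ?thesis
    using e unfolding X_def Y_def X'_def Y'_def by simp
qed

definition shift_back :: "real \<Rightarrow> real \<Rightarrow> real \<Rightarrow> (real \<Rightarrow> 'a::zero) \<Rightarrow> real \<Rightarrow> 'a" where
  "shift_back a b eps x t = (if t \<in> chi_set a b eps 1 then x (t - eps) else 0)"

definition shift_fwd :: "real \<Rightarrow> real \<Rightarrow> real \<Rightarrow> (real \<Rightarrow> 'a::zero) \<Rightarrow> real \<Rightarrow> 'a" where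
  "shift_fwd a b eps x t = (if t \<in> chi_set a b eps (-1) then x (t + eps) else 0)"

lemma shift_back_mult:
  fixes x y :: "real \<Rightarrow> 'a::mult_zero"
  shows "shift_back a b eps (\<lambda>u. x u * y u) t = shift_back a b eps x t * shift_back a b eps y t"
  by (simp add: shift_back_def)

lemma shift_fwd_mult:
  fixes x y :: "real \<Rightarrow> 'a::mult_zero"
  shows "shift_fwd a b eps (\<lambda>u. x u * y u) t = shift_fwd a b eps x t * shift_fwd a b eps y t"
  by (simp add: shift_fwd_def)

lemma shift_back_sum: "shift_back a b eps (\<lambda>u. \<Sum>i\<in>I. h i u) t = (\<Sum>i\<in>I. shift_back a b eps (h i) t)"
  by (simp add: shift_back_def)

lemma shift_fwd_sum: "shift_fwd a b eps (\<lambda>u. \<Sum>i\<in>I. h i u) t = (\<Sum>i\<in>I. shift_fwd a b eps (h i) t)"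
  by (simp add: shift_fwd_def)

lemma box_scalar_three_point:
  "box_scalar a b eps r s x t =
     (r * (shift_fwd a b eps x t - x t) - s * (shift_back a b eps x t - x t)) / complex_of_real eps"
  unfolding box_scalar_def shift_back_def shift_fwd_def
  by (simp add: field_simps diff_divide_distrib add_divide_distrib)

lemma box_scalar_sum:
  "box_scalar a b eps r s (\<lambda>u. \<Sum>i\<in>I. h i u) t = (\<Sum>i\<in>I. box_scalar a b eps r s (h i) t)"
  unfolding box_scalar_three_point shift_back_sum shift_fwd_sum
  by (simp add: sum_divide_distrib[symmetric] sum_subtractf sum_distrib_left right_diff_distrib)

lemma box_vec_component: "box_vec a b eps r s x t $ i = box_scalar a b eps r s (\<lambda>u. x u $ i) t"
  by (simp add: box_vec_def)

lemma box_scalar_product_rule: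
  fixes a b eps t :: real and x y :: "real \<Rightarrow> complex" and r s r' s' :: complex
  assumes "eps \<noteq> 0" and "r * s' - r' * s \<noteq> 0"
  defines "B \<equiv> \<lambda>r s z. box_scalar a b eps r s z t"
  shows "B r s (\<lambda>u. x u * y u) = x t * B r s y + y t * B r s x
     + (of_real eps * (r * s'^2 - r'^2 * s) / (r * s' - r' * s)^2) * (B r s x * B r s y)
     - (of_real eps * r * s * (r - s) / (r * s' - r' * s)^2) * (B r' s' x * B r' s' y)
     + (of_real eps * r * s * (r' - s') / (r * s' - r' * s)^2)
         * (B r s x * B r' s' y + B r' s' x * B r s y)"
  unfolding B_def box_scalar_three_point shift_back_mult shift_fwd_mult
  by (rule three_point_product_rule) (use assms in simp_all)

text \<open>If s/r is not real, then (r, s) and (cnj r, cnj s) have nonzero determinant: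
  the determinant is  r cnj s - cnj (r cnj s), which vanishes iff  r cnj s  is real.\<close>
lemma det_conjugate_nonzero:
  fixes r s :: complex
  assumes "s / r \<notin> \<real>"
  shows "r * cnj s - cnj r * s \<noteq> 0"
proof
  assume "r * cnj s - cnj r * s = 0"
  then have "cnj (r * cnj s) \<in> \<real>"
    by (metis Reals_cnj_iff complex_cnj_cnj complex_cnj_mult eq_iff_diff_eq_0 mult.commute)
  moreover have "s / r = cnj (r * cnj s) / of_real ((cmod r)^2)"
  proof -
    have "r \<noteq> 0"
      using assms by auto
    then have "s / r = cnj (r * cnj s) / (r * cnj r)"
      by (simp add: field_simps)
    then show ?thesis
      by (simp only: complex_norm_square)
  qed
  ultimately show False
    using assms by (metis Reals_divide Reals_of_real)
qed

text \<open>The theorem: the scalar rule with (r', s') = (cnj r, cnj s), applied to each component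
  of the dot product.  The identity is pointwise.\<close>
theorem mainTheorem1:
  fixes a b eps :: real and r s :: complex
    and f g :: "real \<Rightarrow> complex ^ 'd"
  assumes "eps > 0" and "r \<noteq> 0" and "s \<noteq> 0" and "s / r \<notin> \<real>"
    and "piecewise_continuous_on a b f" and "piecewise_continuous_on a b g"
    and "t \<in> {a..b}"
  shows "box_scalar a b eps r s (\<lambda>u. bdot (f u) (g u)) t =
     bdot (f t) (box_vec a b eps r s g t) + bdot (g t) (box_vec a b eps r s f t)
     + (of_real eps * (r * (cnj s)^2 - (cnj r)^2 * s) / (r * cnj s - cnj r * s)^2)
         * bdot (box_vec a b eps r s f t) (box_vec a b eps r s g t)
     - (of_real eps * r * s * (r - s) / (r * cnj s - cnj r * s)^2)
         * bdot (box_vec a b eps (cnj r) (cnj s) f t) (box_vec a b eps (cnj r) (cnj s) g t)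
     + (of_real eps * r * s * (cnj r - cnj s) / (r * cnj s - cnj r * s)^2)
         * (bdot (box_vec a b eps r s f t) (box_vec a b eps (cnj r) (cnj s) g t)
            + bdot (box_vec a b eps (cnj r) (cnj s) f t) (box_vec a b eps r s g t))"
proof -
  have det: "r * cnj s - cnj r * s \<noteq> 0"
    using det_conjugate_nonzero assms(4) .
  have eps: "eps \<noteq> 0"
    using assms(1) by simp
  note componentwise = box_scalar_product_rule[OF eps det, where x="\<lambda>u. f u $ i" and y="\<lambda>u. g u $ i" for i]
  show ?thesis
    unfolding bdot_def box_scalar_sum box_vec_component componentwise
    by (simp only: sum.distrib sum_subtractf sum_distrib_left[symmetric])
qed

end
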